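(* Let $\mathcal{G}$ be a (possibly weighted) undirected graph on $n$ vertices $v_1,\dots,v_n$ in which every vertex has positive degree, and let $\mathbf{P}$, $\mathbf{D}$ be as in the context. Let $0 < t_1 < t_2 < \cdots < t_J$ be integers ($J \ge 1$), and define the filter bank $\mathcal{W}_J' = \{\boldsymbol{\Psi}_j', \boldsymbol{\Phi}_J'\}_{j=0}^{J-1}$ by $$\boldsymbol{\Psi}_0' = \mathbf{I}_n - \mathbf{P}^{t_1},\qquad \boldsymbol{\Psi}_j' = \mathbf{P}^{t_j} - \mathbf{P}^{t_{j+1}}\ (1 \le j \le J-1),\qquad \boldsymbol{\Phi}_J' = \mathbf{P}^{t_J}.$$ Then there exists a constant $C > 0$ depending only on $t_1$ and $t_J$ such that for all $\mathbf{x} \in \mathbb{R}^n$, $$C\,\|\mathbf{x}\|_{\mathbf{D}^{-1/2}}^2 \;\le\; \|\boldsymbol{\Phi}_J'\mathbf{x}\|_{\mathbf{D}^{-1/2}}^2 + \sum_{j=0}^{J-1} \|\boldsymbol{\Psi}_j'\mathbf{x}\|_{\mathbf{D}^{-1/2}}^2 \;\le\; \|\mathbf{x}\|_{\mathbf{D}^{-1/2}}^2 .$$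
   Context: $\mathbf{A}$ denotes the (symmetric, nonnegative) weighted adjacency matrix of $\mathcal{G}$, $d_i = \sum_k \mathbf{A}[i,k] > 0$ the degree of $v_i$, and $\mathbf{D} = \mathrm{diag}(d_1,\dots,d_n)$. $\mathbf{P} = \tfrac12(\mathbf{I}_n + \mathbf{A}\mathbf{D}^{-1})$ is the lazy random walk matrix; $\mathbf{P}^t$ denotes its $t$-th matrix power. Graph signals $\mathbf{x}\in\mathbb{R}^n$ are equipped with the weighted inner product $\langle \mathbf{x},\mathbf{y}\rangle_{\mathbf{D}^{-1/2}} = \langle \mathbf{D}^{-1/2}\mathbf{x}, \mathbf{D}^{-1/2}\mathbf{y}\rangle$ (standard Euclidean inner product on the right) and induced norm $\|\mathbf{x}\|_{\mathbf{D}^{-1/2}}^2 = \|\mathbf{D}^{-1/2}\mathbf{x}\|_2^2 = \sum_{i=1}^n \mathbf{x}[i]^2/d_i$; this space is denoted $L^2(\mathcal{G},\mathbf{D}^{-1/2})$. *)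

theory Defs
  imports Main Complex_Main
begin

text \<open>Vertices are 0..n-1; matrices are functions nat => nat => real, only
entries with indices < n matter; vectors are functions nat => real.\<close>

definition deg :: "nat \<Rightarrow> (nat \<Rightarrow> nat \<Rightarrow> real) \<Rightarrow> nat \<Rightarrow> real" where
  "deg n A i = (\<Sum>k<n. A i k)"

definition idm :: "nat \<Rightarrow> nat \<Rightarrow> real" where
  "idm i j = (if i = j then 1 else 0)"

definition mat_mult :: "nat \<Rightarrow> (nat \<Rightarrow> nat \<Rightarrow> real) \<Rightarrow> (nat \<Rightarrow> nat \<Rightarrow> real) \<Rightarrow> nat \<Rightarrow> nat \<Rightarrow> real" where
  "mat_mult n M N = (\<lambda>i j. \<Sum>k<n. M i k * N k j)"

fun mat_pow :: "nat \<Rightarrow> (nat \<Rightarrow> nat \<Rightarrow> real) \<Rightarrow> nat \<Rightarrow> nat \<Rightarrow> nat \<Rightarrow> real" where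
  "mat_pow n M 0 = idm"
| "mat_pow n M (Suc t) = mat_mult n M (mat_pow n M t)"

definition mat_vec :: "nat \<Rightarrow> (nat \<Rightarrow> nat \<Rightarrow> real) \<Rightarrow> (nat \<Rightarrow> real) \<Rightarrow> nat \<Rightarrow> real" where
  "mat_vec n M x = (\<lambda>i. \<Sum>k<n. M i k * x k)"

definition lazy_walk :: "nat \<Rightarrow> (nat \<Rightarrow> nat \<Rightarrow> real) \<Rightarrow> nat \<Rightarrow> nat \<Rightarrow> real" where
  "lazy_walk n A = (\<lambda>i j. (idm i j + A i j / deg n A j) / 2)"

definition wnorm2 :: "nat \<Rightarrow> (nat \<Rightarrow> nat \<Rightarrow> real) \<Rightarrow> (nat \<Rightarrow> real) \<Rightarrow> real" where
  "wnorm2 n A x = (\<Sum>i<n. (x i)\<^sup>2 / deg n A i)"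

definition is_graph :: "nat \<Rightarrow> (nat \<Rightarrow> nat \<Rightarrow> real) \<Rightarrow> bool" where
  "is_graph n A \<longleftrightarrow> (\<forall>i<n. \<forall>j<n. A i j = A j i \<and> 0 \<le> A i j) \<and> (\<forall>i<n. 0 < deg n A i)"

end

theory Submission
  imports Defs "HOL-Analysis.Convex"
begin

text \<open>The lazy walk \<open>P\<close> is self-adjoint on \<open>L\<^sup>2(\<G>, D\<^sup>-\<^sup>1\<^sup>/\<^sup>2)\<close> and satisfies
  \<open>\<parallel>Px\<parallel>\<^sup>2 \<le> \<langle>Px, x\<rangle> \<le> \<parallel>x\<parallel>\<^sup>2\<close>, since \<open>P = (I + AD\<^sup>-\<^sup>1)/2\<close> and \<open>AD\<^sup>-\<^sup>1\<close> is a contraction.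
  Hence \<open>\<langle>P\<^sup>k z, z\<rangle>\<close> is non-increasing in \<open>k\<close>, which gives
  \<open>\<parallel>(P\<^sup>a - P\<^sup>b)x\<parallel>\<^sup>2 \<le> \<parallel>P\<^sup>ax\<parallel>\<^sup>2 - \<parallel>P\<^sup>bx\<parallel>\<^sup>2\<close> for \<open>a \<le> b\<close>; summed over the bands this telescopes
  to the upper frame bound. For the lower bound, \<open>x - P\<^sup>m\<^sup>ax = (\<Sum>k<m. P\<^sup>k\<^sup>a(I - P\<^sup>a)x)\<close> and
  contractivity give \<open>\<parallel>x\<parallel> \<le> m \<parallel>(I - P\<^sup>a)x\<parallel> + \<parallel>P\<^sup>mx\<parallel>\<close>; with \<open>a = t\<^sub>1\<close>, \<open>m = t\<^sub>J\<close> and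
  Cauchy-Schwarz this yields the constant \<open>C = 1/(t\<^sub>J\<^sup>2 + 1)\<close>.\<close>

lemma idm_sum:
  assumes "i < n"
  shows "(\<Sum>k<n. idm i k * x k) = x i"
proof -
  have "(\<lambda>k. idm i k * x k) = (\<lambda>k. if i = k then x i else 0)" by (auto simp: idm_def)
  with assms show ?thesis by (simp only:) simp
qed

lemma mat_vec_idm: "i < n \<Longrightarrow> mat_vec n idm x i = x i"
  unfolding mat_vec_def by (rule idm_sum)

lemma mat_vec_mat_mult: "mat_vec n (mat_mult n M N) x = mat_vec n M (mat_vec n N x)"
proof
  fix i
  have "mat_vec n (mat_mult n M N) x i = (\<Sum>k<n. \<Sum>l<n. M i l * N l k * x k)"
    unfolding mat_vec_def mat_mult_def by (simp add: sum_distrib_right)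
  also have "\<dots> = (\<Sum>l<n. \<Sum>k<n. M i l * N l k * x k)" by (rule sum.swap)
  also have "\<dots> = mat_vec n M (mat_vec n N x) i"
    unfolding mat_vec_def by (simp add: sum_distrib_left mult.assoc)
  finally show "mat_vec n (mat_mult n M N) x i = mat_vec n M (mat_vec n N x) i" .
qed

lemma mat_vec_cong: "(\<And>k. k < n \<Longrightarrow> u k = v k) \<Longrightarrow> mat_vec n M u = mat_vec n M v"
  unfolding mat_vec_def by simp

lemma mat_vec_diff:
  "mat_vec n (\<lambda>a b. M a b - N a b) x = (\<lambda>i. mat_vec n M x i - mat_vec n N x i)"
  unfolding mat_vec_def by (simp add: left_diff_distrib sum_subtractf)

lemma square_add_le_mult_sum_squares:
  fixes m p q :: real
  shows "(m * p + q)\<^sup>2 \<le> (m\<^sup>2 + 1) * (p\<^sup>2 + q\<^sup>2)"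
proof -
  have "(m\<^sup>2 + 1) * (p\<^sup>2 + q\<^sup>2) - (m * p + q)\<^sup>2 = (p - m * q)\<^sup>2"
    by (simp add: power2_eq_square algebra_simps)
  then show ?thesis by (metis diff_ge_0_iff_ge zero_le_power2)
qed

locale weighted_graph =
  fixes n :: nat and A :: "nat \<Rightarrow> nat \<Rightarrow> real"
  assumes graph: "is_graph n A"
begin

abbreviation "d i \<equiv> deg n A i"

lemma deg_pos: "i < n \<Longrightarrow> 0 < d i"
  using graph unfolding is_graph_def by auto

lemma adj_sym: "i < n \<Longrightarrow> j < n \<Longrightarrow> A i j = A j i"
  using graph unfolding is_graph_def by auto

lemma adj_nonneg: "i < n \<Longrightarrow> j < n \<Longrightarrow> 0 \<le> A i j"
  using graph unfolding is_graph_def by auto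

definition winner :: "(nat \<Rightarrow> real) \<Rightarrow> (nat \<Rightarrow> real) \<Rightarrow> real" where
  "winner x y = (\<Sum>i<n. x i * y i / d i)"

lemma wnorm2_eq_winner: "wnorm2 n A x = winner x x"
  unfolding wnorm2_def winner_def by (simp add: power2_eq_square)

lemma winner_commute: "winner x y = winner y x"
  unfolding winner_def by (simp add: mult.commute)

lemma winner_cong:
  "(\<And>i. i < n \<Longrightarrow> u i = u' i) \<Longrightarrow> (\<And>i. i < n \<Longrightarrow> v i = v' i) \<Longrightarrow> winner u v = winner u' v'"
  unfolding winner_def by simp

lemma winner_midpoint_left: "winner (\<lambda>i. (u i + v i) / 2) y = (winner u y + winner v y) / 2"
  unfolding winner_def
  by (simp add: sum.distrib[symmetric] sum_divide_distrib add_divide_distrib algebra_simps)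

lemma winner_midpoint_right: "winner y (\<lambda>i. (u i + v i) / 2) = (winner y u + winner y v) / 2"
  using winner_midpoint_left winner_commute by metis

lemma wnorm2_nonneg: "0 \<le> wnorm2 n A x"
  unfolding wnorm2_def by (intro sum_nonneg) (auto intro: divide_nonneg_pos deg_pos)

lemma wnorm2_cong: "(\<And>i. i < n \<Longrightarrow> u i = v i) \<Longrightarrow> wnorm2 n A u = wnorm2 n A v"
  unfolding wnorm2_def by simp

lemma wnorm2_diff:
  "wnorm2 n A (\<lambda>i. x i - y i) = wnorm2 n A x - 2 * winner x y + wnorm2 n A y"
proof -
  have "wnorm2 n A (\<lambda>i. x i - y i)
      = (\<Sum>i<n. x i * x i / d i - 2 * (x i * y i / d i) + y i * y i / d i)"
    unfolding wnorm2_def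
    by (intro sum.cong refl) (simp add: power2_eq_square divide_inverse algebra_simps)
  then show ?thesis
    unfolding wnorm2_eq_winner winner_def by (simp add: sum.distrib sum_subtractf sum_distrib_left)
qed

lemma wnorm2_add:
  "wnorm2 n A (\<lambda>i. x i + y i) = wnorm2 n A x + 2 * winner x y + wnorm2 n A y"
  using wnorm2_diff[of x "\<lambda>i. - y i"] unfolding winner_def wnorm2_def
  by (simp add: sum_negf)

lemma wnorm2_as_sum_squares: "wnorm2 n A x = (\<Sum>i<n. (x i / sqrt (d i))\<^sup>2)"
  unfolding wnorm2_def using deg_pos by (intro sum.cong refl) (simp add: power_divide less_imp_le)

lemma winner_Cauchy_Schwarz: "winner x y \<le> sqrt (wnorm2 n A x) * sqrt (wnorm2 n A y)"
proof -
  have "winner x y = (\<Sum>i<n. (x i / sqrt (d i)) * (y i / sqrt (d i)))"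
    unfolding winner_def using deg_pos
    by (intro sum.cong refl) (simp add: field_simps less_imp_le flip: real_sqrt_mult)
  then have "(winner x y)\<^sup>2 \<le> wnorm2 n A x * wnorm2 n A y"
    unfolding wnorm2_as_sum_squares by (simp only: Cauchy_Schwarz_ineq_sum)
  then have "\<bar>winner x y\<bar> \<le> sqrt (wnorm2 n A x * wnorm2 n A y)"
    using real_sqrt_le_mono by fastforce
  then show ?thesis by (simp add: real_sqrt_mult)
qed

lemma wnorm_triangle:
  "sqrt (wnorm2 n A (\<lambda>i. x i + y i)) \<le> sqrt (wnorm2 n A x) + sqrt (wnorm2 n A y)"
proof -
  have "wnorm2 n A (\<lambda>i. x i + y i) \<le> (sqrt (wnorm2 n A x) + sqrt (wnorm2 n A y))\<^sup>2"
    unfolding wnorm2_add power2_sum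
    using winner_Cauchy_Schwarz[of x y] wnorm2_nonneg[of x] wnorm2_nonneg[of y] by simp
  then show ?thesis by (simp add: real_le_lsqrt wnorm2_nonneg)
qed

definition adj_op :: "(nat \<Rightarrow> real) \<Rightarrow> nat \<Rightarrow> real" where
  "adj_op x = (\<lambda>i. \<Sum>j<n. A i j * x j / d j)"

definition lazy_op :: "(nat \<Rightarrow> real) \<Rightarrow> nat \<Rightarrow> real" where
  "lazy_op x = mat_vec n (lazy_walk n A) x"

lemma lazy_op_eq: "i < n \<Longrightarrow> lazy_op x i = (x i + adj_op x i) / 2"
proof -
  assume i: "i < n"
  have "lazy_op x i = (\<Sum>k<n. idm i k * x k) / 2 + (\<Sum>k<n. A i k * x k / d k) / 2"
    unfolding lazy_op_def mat_vec_def lazy_walk_def sum_divide_distrib sum.distrib[symmetric]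
    by (intro sum.cong refl) (simp add: field_simps)
  then show ?thesis unfolding adj_op_def idm_sum[OF i] by simp
qed

lemma lazy_op_diff: "lazy_op (\<lambda>i. u i - v i) = (\<lambda>i. lazy_op u i - lazy_op v i)"
  unfolding lazy_op_def mat_vec_def by (simp add: right_diff_distrib sum_subtractf)

lemma adj_op_self_adjoint: "winner (adj_op x) y = winner x (adj_op y)"
proof -
  have "winner (adj_op x) y = (\<Sum>i<n. \<Sum>j<n. A i j * x j * y i / (d j * d i))"
    unfolding winner_def adj_op_def by (simp add: sum_distrib_right sum_divide_distrib)
  also have "\<dots> = (\<Sum>j<n. \<Sum>i<n. A i j * x j * y i / (d j * d i))"
    by (rule sum.swap)
  also have "\<dots> = (\<Sum>j<n. \<Sum>i<n. A j i * x j * y i / (d j * d i))"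
    by (intro sum.cong refl) (simp add: adj_sym)
  also have "\<dots> = winner x (adj_op y)"
    unfolding winner_def adj_op_def
    by (simp add: sum_distrib_left sum_divide_distrib mult.commute mult.left_commute)
  finally show ?thesis .
qed

text \<open>Row-wise Cauchy-Schwarz with weights \<open>A i j\<close>, whose row sums are the degrees.\<close>

lemma adj_op_row_bound: "i < n \<Longrightarrow> (adj_op x i)\<^sup>2 / d i \<le> (\<Sum>j<n. A i j * (x j / d j)\<^sup>2)"
proof -
  assume i: "i < n"
  have "(adj_op x i)\<^sup>2 = (\<Sum>j<n. sqrt (A i j) * (sqrt (A i j) * (x j / d j)))\<^sup>2"
    unfolding adj_op_def using adj_nonneg[OF i]
    by (intro arg_cong[where f="\<lambda>z. z\<^sup>2"] sum.cong refl) (simp add: mult.assoc[symmetric])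
  also have "\<dots> \<le> (\<Sum>j<n. (sqrt (A i j))\<^sup>2) * (\<Sum>j<n. (sqrt (A i j) * (x j / d j))\<^sup>2)"
    by (rule Cauchy_Schwarz_ineq_sum)
  also have "(\<Sum>j<n. (sqrt (A i j))\<^sup>2) = d i"
    unfolding deg_def using adj_nonneg[OF i] by (intro sum.cong refl) simp
  also have "(\<Sum>j<n. (sqrt (A i j) * (x j / d j))\<^sup>2) = (\<Sum>j<n. A i j * (x j / d j)\<^sup>2)"
    using adj_nonneg[OF i] by (intro sum.cong refl) (simp add: power_mult_distrib power_divide)
  finally show ?thesis using deg_pos[OF i] by (simp add: divide_le_eq mult.commute)
qed

lemma wnorm2_adj_op_le: "wnorm2 n A (adj_op x) \<le> wnorm2 n A x"
proof -
  have "wnorm2 n A (adj_op x) \<le> (\<Sum>i<n. \<Sum>j<n. A i j * (x j / d j)\<^sup>2)"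
    unfolding wnorm2_def by (intro sum_mono adj_op_row_bound) auto
  also have "\<dots> = (\<Sum>j<n. \<Sum>i<n. A i j * (x j / d j)\<^sup>2)" by (rule sum.swap)
  also have "\<dots> = (\<Sum>j<n. d j * (x j / d j)\<^sup>2)"
    unfolding deg_def by (intro sum.cong refl) (simp add: sum_distrib_right adj_sym)
  also have "\<dots> = wnorm2 n A x"
    unfolding wnorm2_def using deg_pos by (intro sum.cong refl) (simp add: power2_eq_square)
  finally show ?thesis .
qed

lemma winner_adj_op_le: "winner (adj_op x) x \<le> wnorm2 n A x"
  using wnorm2_diff[of x "adj_op x"] wnorm2_nonneg[of "\<lambda>i. x i - adj_op x i"]
    wnorm2_adj_op_le[of x] winner_commute[of x "adj_op x"]
  by linarith

lemma winner_lazy_op: "winner (lazy_op x) y = (winner x y + winner (adj_op x) y) / 2"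
proof -
  have "winner (lazy_op x) y = winner (\<lambda>i. (x i + adj_op x i) / 2) y"
    by (rule winner_cong) (auto simp: lazy_op_eq)
  then show ?thesis by (simp add: winner_midpoint_left)
qed

lemma lazy_op_self_adjoint: "winner (lazy_op x) y = winner x (lazy_op y)"
proof -
  have "winner x (lazy_op y) = winner x (\<lambda>i. (y i + adj_op y i) / 2)"
    by (rule winner_cong) (auto simp: lazy_op_eq)
  then show ?thesis
    using winner_lazy_op[of x y] adj_op_self_adjoint[of x y] by (simp add: winner_midpoint_right)
qed

lemma wnorm2_lazy_op_le_winner: "wnorm2 n A (lazy_op x) \<le> winner (lazy_op x) x"
proof -
  have "wnorm2 n A (lazy_op x) = winner (\<lambda>i. (x i + adj_op x i) / 2) (\<lambda>i. (x i + adj_op x i) / 2)"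
    unfolding wnorm2_eq_winner by (rule winner_cong) (auto simp: lazy_op_eq)
  also have "\<dots> = (wnorm2 n A x + 2 * winner (adj_op x) x + wnorm2 n A (adj_op x)) / 4"
    using winner_commute[of x "adj_op x"]
    by (simp add: winner_midpoint_left winner_midpoint_right wnorm2_eq_winner field_simps)
  finally show ?thesis
    using winner_lazy_op[of x x] wnorm2_adj_op_le[of x] by (simp add: wnorm2_eq_winner)
qed

lemma winner_lazy_op_le: "winner (lazy_op x) x \<le> wnorm2 n A x"
  using winner_lazy_op[of x x] winner_adj_op_le[of x] by (simp add: wnorm2_eq_winner)

definition walk_pow :: "nat \<Rightarrow> (nat \<Rightarrow> real) \<Rightarrow> nat \<Rightarrow> real" where
  "walk_pow k = lazy_op ^^ k"

lemma walk_pow_0 [simp]: "walk_pow 0 x = x"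
  unfolding walk_pow_def by simp

lemma walk_pow_Suc: "walk_pow (Suc k) x = lazy_op (walk_pow k x)"
  unfolding walk_pow_def by simp

lemma walk_pow_Suc': "walk_pow (Suc k) x = walk_pow k (lazy_op x)"
  unfolding walk_pow_def by (simp add: funpow_swap1)

lemma walk_pow_add: "walk_pow (a + b) x = walk_pow a (walk_pow b x)"
  unfolding walk_pow_def by (simp add: funpow_add)

lemma walk_pow_diff: "walk_pow k (\<lambda>i. u i - v i) = (\<lambda>i. walk_pow k u i - walk_pow k v i)"
  by (induction k) (simp_all add: walk_pow_Suc lazy_op_diff)

lemma walk_pow_self_adjoint: "winner (walk_pow k x) y = winner x (walk_pow k y)"
proof (induction k arbitrary: y)
  case 0
  then show ?case by simp
next
  case (Suc k)
  have "winner (walk_pow (Suc k) x) y = winner (walk_pow k x) (lazy_op y)"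
    by (simp add: walk_pow_Suc lazy_op_self_adjoint)
  also have "\<dots> = winner x (walk_pow (Suc k) y)" by (simp add: Suc walk_pow_Suc')
  finally show ?case .
qed

lemma wnorm2_walk_pow_le: "wnorm2 n A (walk_pow k x) \<le> wnorm2 n A x"
proof (induction k)
  case 0
  then show ?case by simp
next
  case (Suc k)
  then show ?case
    using wnorm2_lazy_op_le_winner[of "walk_pow k x"] winner_lazy_op_le[of "walk_pow k x"]
    by (simp add: walk_pow_Suc)
qed

lemma winner_walk_pow_add: "winner (walk_pow (a + b) z) z = winner (walk_pow a z) (walk_pow b z)"
  by (simp add: walk_pow_add walk_pow_self_adjoint winner_commute)

text \<open>Split \<open>P\<^sup>e\<^sup>+\<^sup>1\<close> symmetrically as \<open>P\<^sup>k P P\<^sup>k\<close> or \<open>P\<^sup>k\<^sup>+\<^sup>1 P\<^sup>k\<^sup>+\<^sup>1\<close> and apply \<open>P\<^sup>2 \<le> P \<le> I\<close>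
  to \<open>P\<^sup>kz\<close>.\<close>

lemma winner_walk_pow_Suc_le: "winner (walk_pow (Suc e) z) z \<le> winner (walk_pow e z) z"
proof (cases "even e")
  case True
  then obtain k where e: "e = k + k" by (metis evenE mult_2)
  have "winner (walk_pow (Suc e) z) z = winner (lazy_op (walk_pow k z)) (walk_pow k z)"
    using winner_walk_pow_add[of "Suc k" k z] by (simp add: e walk_pow_Suc)
  also have "\<dots> \<le> wnorm2 n A (walk_pow k z)" by (rule winner_lazy_op_le)
  also have "\<dots> = winner (walk_pow e z) z"
    using winner_walk_pow_add[of k k z] by (simp add: e wnorm2_eq_winner)
  finally show ?thesis .
next
  case False
  then obtain k where e: "e = Suc (k + k)" by (metis oddE mult_2 Suc_eq_plus1)
  have "winner (walk_pow (Suc e) z) z = wnorm2 n A (lazy_op (walk_pow k z))"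
    using winner_walk_pow_add[of "Suc k" "Suc k" z] by (simp add: e walk_pow_Suc wnorm2_eq_winner)
  also have "\<dots> \<le> winner (lazy_op (walk_pow k z)) (walk_pow k z)"
    by (rule wnorm2_lazy_op_le_winner)
  also have "\<dots> = winner (walk_pow e z) z"
    using winner_walk_pow_add[of "Suc k" k z] by (simp add: e walk_pow_Suc)
  finally show ?thesis .
qed

lemma winner_walk_pow_antimono: "a \<le> b \<Longrightarrow> winner (walk_pow b z) z \<le> winner (walk_pow a z) z"
proof (induction b rule: dec_induct)
  case base
  then show ?case by simp
next
  case (step m)
  then show ?case using winner_walk_pow_Suc_le[of m z] by linarith
qed

lemma wnorm2_walk_pow_band_le:
  assumes "a \<le> b"
  shows "wnorm2 n A (\<lambda>i. walk_pow a x i - walk_pow b x i)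
    \<le> wnorm2 n A (walk_pow a x) - wnorm2 n A (walk_pow b x)"
proof -
  define c where "c = b - a"
  define z where "z = walk_pow a x"
  have b: "walk_pow b x = walk_pow c z"
    unfolding c_def z_def using assms walk_pow_add[of "b - a" a x] by simp
  have "wnorm2 n A (walk_pow c z) = winner (walk_pow (c + c) z) z"
    by (simp add: winner_walk_pow_add wnorm2_eq_winner)
  also have "\<dots> \<le> winner (walk_pow c z) z" by (rule winner_walk_pow_antimono) simp
  finally have "wnorm2 n A (walk_pow c z) \<le> winner z (walk_pow c z)" by (simp add: winner_commute)
  then show ?thesis using wnorm2_diff[of z "walk_pow c z"] unfolding b z_def[symmetric] by linarith
qed

lemma wnorm_le_walk_pow_telescope:
  "sqrt (wnorm2 n A x) \<le> real m * sqrt (wnorm2 n A (\<lambda>i. x i - walk_pow a x i))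
    + sqrt (wnorm2 n A (walk_pow (m * a) x))"
proof (induction m)
  case 0
  then show ?case by simp
next
  case (Suc m)
  let ?u = "\<lambda>i. walk_pow (m * a) x i - walk_pow (Suc m * a) x i"
  let ?v = "walk_pow (Suc m * a) x"
  have "sqrt (wnorm2 n A (walk_pow (m * a) x)) = sqrt (wnorm2 n A (\<lambda>i. ?u i + ?v i))" by simp
  also have "\<dots> \<le> sqrt (wnorm2 n A ?u) + sqrt (wnorm2 n A ?v)" by (rule wnorm_triangle)
  also have "?u = walk_pow (m * a) (\<lambda>i. x i - walk_pow a x i)"
    using walk_pow_add[of "m * a" a x] by (simp add: walk_pow_diff add.commute)
  also have "wnorm2 n A \<dots> \<le> wnorm2 n A (\<lambda>i. x i - walk_pow a x i)"
    by (rule wnorm2_walk_pow_le)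
  finally show ?case using Suc by (simp add: algebra_simps)
qed

lemma walk_pow_frame_upper:
  assumes "\<And>j. j < J \<Longrightarrow> s j \<le> s (Suc j)"
  shows "wnorm2 n A (walk_pow (s J) x)
    + (\<Sum>j<J. wnorm2 n A (\<lambda>i. walk_pow (s j) x i - walk_pow (s (Suc j)) x i))
    \<le> wnorm2 n A (walk_pow (s 0) x)"
proof -
  let ?f = "\<lambda>j. wnorm2 n A (walk_pow (s j) x)"
  have "(\<Sum>j<J. wnorm2 n A (\<lambda>i. walk_pow (s j) x i - walk_pow (s (Suc j)) x i))
      \<le> (\<Sum>j<J. ?f j - ?f (Suc j))"
    by (intro sum_mono wnorm2_walk_pow_band_le assms) simp
  also have "\<dots> = ?f 0 - ?f J" by (rule sum_lessThan_telescope')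
  finally show ?thesis by simp
qed

lemma walk_pow_frame_lower:
  assumes "0 < a"
  shows "wnorm2 n A x
    \<le> ((real m)\<^sup>2 + 1) * (wnorm2 n A (\<lambda>i. x i - walk_pow a x i) + wnorm2 n A (walk_pow m x))"
proof -
  let ?p = "sqrt (wnorm2 n A (\<lambda>i. x i - walk_pow a x i))"
  let ?q = "sqrt (wnorm2 n A (walk_pow m x))"
  have "walk_pow (m * a) x = walk_pow ((a - 1) * m) (walk_pow m x)"
  proof -
    have "m * a = (a - 1) * m + m" using assms by (cases a) auto
    then show ?thesis by (simp add: walk_pow_add)
  qed
  then have "sqrt (wnorm2 n A (walk_pow (m * a) x)) \<le> ?q"
    by (simp add: wnorm2_walk_pow_le)
  then have "sqrt (wnorm2 n A x) \<le> real m * ?p + ?q"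
    using wnorm_le_walk_pow_telescope[of x m a] by linarith
  then have "(sqrt (wnorm2 n A x))\<^sup>2 \<le> (real m * ?p + ?q)\<^sup>2"
    by (rule power_mono) (simp add: wnorm2_nonneg)
  then have "wnorm2 n A x \<le> (real m * ?p + ?q)\<^sup>2"
    using wnorm2_nonneg[of x] by simp
  also have "\<dots> \<le> ((real m)\<^sup>2 + 1) * (?p\<^sup>2 + ?q\<^sup>2)" by (rule square_add_le_mult_sum_squares)
  finally show ?thesis by (simp add: wnorm2_nonneg)
qed

lemma mat_vec_mat_pow_lazy_walk:
  "i < n \<Longrightarrow> mat_vec n (mat_pow n (lazy_walk n A) k) x i = walk_pow k x i"
proof (induction k arbitrary: i)
  case 0
  then show ?case by (simp add: mat_vec_idm)
next
  case (Suc k)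
  have "mat_vec n (mat_pow n (lazy_walk n A) (Suc k)) x
      = mat_vec n (lazy_walk n A) (mat_vec n (mat_pow n (lazy_walk n A) k) x)"
    by (simp add: mat_vec_mat_mult)
  also have "\<dots> = lazy_op (walk_pow k x)"
    unfolding lazy_op_def by (rule mat_vec_cong) (rule Suc.IH)
  finally show ?case by (simp add: walk_pow_Suc)
qed

lemma lazy_walk_filter_bank_frame:
  fixes J :: nat and t :: "nat \<Rightarrow> nat"
  assumes J: "1 \<le> J" and t1: "0 < t 1" and t_mono: "\<forall>j. 1 \<le> j \<and> j < J \<longrightarrow> t j < t (j + 1)"
  shows "let P = lazy_walk n A;
          Phi = mat_pow n P (t J);
          Psi = (\<lambda>j. if j = 0 then (\<lambda>a b. idm a b - mat_pow n P (t 1) a b)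
                     else (\<lambda>a b. mat_pow n P (t j) a b - mat_pow n P (t (j + 1)) a b));
          S = wnorm2 n A (mat_vec n Phi x) + (\<Sum>j<J. wnorm2 n A (mat_vec n (Psi j) x))
      in 1 / ((real (t J))\<^sup>2 + 1) * wnorm2 n A x \<le> S \<and> S \<le> wnorm2 n A x"
proof -
  \<comment> \<open>With \<open>s 0 = 0\<close> the band \<open>\<Psi>\<^sub>0 = I - P\<^sup>t\<^sup>1\<close> takes the same form \<open>P\<^sup>s\<^sup>j - P\<^sup>s\<^sup>(\<^sup>j\<^sup>+\<^sup>1\<^sup>)\<close> as the others.\<close>
  define s where "s j = (if j = 0 then 0 else t j)" for j :: nat
  let ?band = "\<lambda>j::nat. wnorm2 n A (\<lambda>i. walk_pow (s j) x i - walk_pow (s (Suc j)) x i)"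
  let ?S = "wnorm2 n A (walk_pow (s J) x) + (\<Sum>j<J. ?band j)"
  have s_mono: "j < J \<Longrightarrow> s j \<le> s (Suc j)" for j
    using t_mono by (auto simp: s_def less_imp_le)
  have "wnorm2 n A x \<le> ((real (t J))\<^sup>2 + 1) * (?band 0 + wnorm2 n A (walk_pow (s J) x))"
    using walk_pow_frame_lower[OF t1, of x "t J"] J by (simp add: s_def)
  also have "\<dots> \<le> ((real (t J))\<^sup>2 + 1) * ?S"
  proof (rule mult_left_mono)
    have "?band 0 \<le> (\<Sum>j<J. ?band j)"
      using J by (intro member_le_sum) (auto simp: wnorm2_nonneg)
    then show "?band 0 + wnorm2 n A (walk_pow (s J) x) \<le> ?S" by simp
  qed simp
  finally have lower: "1 / ((real (t J))\<^sup>2 + 1) * wnorm2 n A x \<le> ?S"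
    by (simp add: field_simps add_pos_nonneg)
  have upper: "?S \<le> wnorm2 n A x"
    using walk_pow_frame_upper[of J s x] s_mono by (simp add: s_def)
  have "mat_vec n (if j = 0 then (\<lambda>a b. idm a b - mat_pow n (lazy_walk n A) (t 1) a b)
      else (\<lambda>a b. mat_pow n (lazy_walk n A) (t j) a b - mat_pow n (lazy_walk n A) (t (j + 1)) a b)) x i
    = walk_pow (s j) x i - walk_pow (s (Suc j)) x i" if "i < n" for i j
    using that by (simp add: s_def mat_vec_diff mat_vec_idm mat_vec_mat_pow_lazy_walk)
  moreover have "mat_vec n (mat_pow n (lazy_walk n A) (t J)) x i = walk_pow (s J) x i"
    if "i < n" for i
    using that J by (simp add: s_def mat_vec_mat_pow_lazy_walk)
  ultimately show ?thesis
    unfolding Let_def using lower upper by (simp cong: wnorm2_cong)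
qed

end

theorem theorem1:
  fixes t1 tJ :: nat
  assumes "0 < t1" and "t1 \<le> tJ"
  shows "\<exists>C>0. \<forall>(n::nat) (A::nat \<Rightarrow> nat \<Rightarrow> real) (J::nat) (t::nat \<Rightarrow> nat) (x::nat \<Rightarrow> real).
     is_graph n A \<and> 1 \<le> J \<and> t 1 = t1 \<and> t J = tJ \<and> (\<forall>j. 1 \<le> j \<and> j < J \<longrightarrow> t j < t (j + 1)) \<longrightarrow>
     (let P = lazy_walk n A;
          Phi = mat_pow n P (t J);
          Psi = (\<lambda>j. if j = 0 then (\<lambda>a b. idm a b - mat_pow n P (t 1) a b)
                     else (\<lambda>a b. mat_pow n P (t j) a b - mat_pow n P (t (j + 1)) a b));
          S = wnorm2 n A (mat_vec n Phi x) + (\<Sum>j<J. wnorm2 n A (mat_vec n (Psi j) x))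
      in C * wnorm2 n A x \<le> S \<and> S \<le> wnorm2 n A x)"
proof (intro exI[of _ "1 / ((real tJ)\<^sup>2 + 1)"] conjI allI impI)
  show "0 < 1 / ((real tJ)\<^sup>2 + 1)" by (simp add: add_nonneg_pos)
next
  fix n A J and t :: "nat \<Rightarrow> nat" and x
  assume H: "is_graph n A \<and> 1 \<le> J \<and> t 1 = t1 \<and> t J = tJ \<and> (\<forall>j. 1 \<le> j \<and> j < J \<longrightarrow> t j < t (j + 1))"
  then interpret weighted_graph n A by unfold_locales simp
  from H \<open>0 < t1\<close> show "let P = lazy_walk n A;
          Phi = mat_pow n P (t J);
          Psi = (\<lambda>j. if j = 0 then (\<lambda>a b. idm a b - mat_pow n P (t 1) a b)
                     else (\<lambda>a b. mat_pow n P (t j) a b - mat_pow n P (t (j + 1)) a b));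
          S = wnorm2 n A (mat_vec n Phi x) + (\<Sum>j<J. wnorm2 n A (mat_vec n (Psi j) x))
      in 1 / ((real tJ)\<^sup>2 + 1) * wnorm2 n A x \<le> S \<and> S \<le> wnorm2 n A x"
    using lazy_walk_filter_bank_frame[of J t x] by auto
qed

end
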